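(* Let $n>2$ and $1<p<\infty$. Let $\Delta_n=\{\mathbf{s}\in\mathbb{R}^n: s_i\ge0\ \forall i,\ \sum_i s_i=1\}$ and for $\mathbf{s}\in\Delta_n$ let $M(\mathbf{s})=\operatorname{Diag}(\mathbf{s})-\mathbf{s}\mathbf{s}^\top\in\mathbb{R}^{n\times n}$. Then for $\mathbf{s}\in\Delta_n$, $\|M(\mathbf{s})\|_p=\tfrac12$ if and only if $\mathbf{s}$ is a coordinate permutation of $(1/2,1/2,0,\dots,0)$.
   Context: For $p\in[1,\infty)$, $\|\mathbf{x}\|_p=(\sum_i|x_i|^p)^{1/p}$; for a square matrix $A$, $\|A\|_p=\sup_{\mathbf{v}\ne0}\|A\mathbf{v}\|_p/\|\mathbf{v}\|_p$ is the induced operator norm. $\operatorname{Diag}(\mathbf{s})$ is the diagonal matrix with diagonal $\mathbf{s}$. *)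

theory Defs
  imports "HOL-Analysis.Analysis"
begin

definition pnorm :: "real \<Rightarrow> real^'n \<Rightarrow> real" where
  "pnorm p x = (\<Sum>i\<in>UNIV. \<bar>x $ i\<bar> powr p) powr (1 / p)"

definition op_pnorm :: "real \<Rightarrow> real^'n^'n \<Rightarrow> real" where
  "op_pnorm p A = Sup {pnorm p (A *v v) / pnorm p v | v. v \<noteq> 0}"

definition prob_simplex :: "(real^'n) set" where
  "prob_simplex = {s. (\<forall>i. s $ i \<ge> 0) \<and> (\<Sum>i\<in>UNIV. s $ i) = 1}"

definition Diag :: "real^'n \<Rightarrow> real^'n^'n" where
  "Diag s = (\<chi> i j. if i = j then s $ i else 0)"

definition Mmat :: "real^'n \<Rightarrow> real^'n^'n" where
  "Mmat s = Diag s - (\<chi> i j. s $ i * s $ j)"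

end

theory Submission
  imports Defs
begin

text \<open>
  For s in the simplex, M(s) v is the weighted graph Laplacian
  (L v)_k = sum_j a_kj (v_k - v_j) of the complete graph with edge weights a_ij = s_i s_j,
  whose weighted degrees d_k = s_k (1 - s_k) are at most 1/4. Jensen's inequality for t^p
  and |x - y|^p <= 2^(p-1) (|x|^p + |y|^p) give
  sum_k |(L v)_k|^p <= 2^(p-1) sum_k c_k |v_k|^p  with  c_k = d_k^p + sum_i d_i^(p-1) a_ik,
  and symmetry of the weights gives c_k <= 2 (1/4)^p, hence ||M(s)||_p <= 1/2.
  For p > 1 the bound on c_k is strict unless s_k = 1/2 and every i with a_ik > 0 also has
  s_i = 1/2, which on the simplex forces s to be two halves; otherwise the maximum of the
  finitely many c_k gives ||M(s)||_p < 1/2. For two halves at i and j, the vector e_i - e_j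
  is an eigenvector of M(s) with eigenvalue 1/2.
\<close>

lemma convex_on_powr_nonneg:
  assumes "1 \<le> p" shows "convex_on {0..} (\<lambda>x::real. x powr p)"
proof (rule convex_onI)
  fix t x y :: real
  assume t: "0 < t" "t < 1" and xy: "x \<in> {0..}" "y \<in> {0..}"
  show "((1 - t) *\<^sub>R x + t *\<^sub>R y) powr p \<le> (1 - t) * x powr p + t * y powr p"
  proof (cases "x = 0 \<or> y = 0")
    case False
    then show ?thesis
      using convex_onD[OF powr_convex[OF assms], of t x y] t xy by simp
  next
    case True
    have scale: "(c * z) powr p \<le> c * z powr p" if "0 < c" "c < 1" "0 \<le> z" for c z :: real
      using powr_le_one_le[of c p] that assms by (simp add: powr_mult mult_right_mono)
    show ?thesis
      using True scale[of t y] scale[of "1 - t" x] t xy assms by auto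
  qed
qed simp

lemma powr_weighted_sum_le:
  fixes a x :: "'i \<Rightarrow> real"
  assumes "finite I" and a: "\<And>i. i \<in> I \<Longrightarrow> 0 \<le> a i" and "1 \<le> p"
  shows "(\<Sum>i\<in>I. a i * \<bar>x i\<bar>) powr p \<le> (\<Sum>i\<in>I. a i) powr (p - 1) * (\<Sum>i\<in>I. a i * \<bar>x i\<bar> powr p)"
proof (cases "(\<Sum>i\<in>I. a i) = 0")
  case True
  then have "\<forall>i\<in>I. a i = 0"
    using sum_nonneg_eq_0_iff[OF \<open>finite I\<close>] a by blast
  then show ?thesis by simp
next
  case False
  define A where "A = (\<Sum>i\<in>I. a i)"
  have "A > 0"
    using False a sum_nonneg[of I a] unfolding A_def by fastforce
  have "(\<Sum>i\<in>I. (a i / A) *\<^sub>R \<bar>x i\<bar>) powr p \<le> (\<Sum>i\<in>I. a i / A * \<bar>x i\<bar> powr p)"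
    using \<open>A > 0\<close> False a
    by (intro convex_on_sum[OF \<open>finite I\<close> _ convex_on_powr_nonneg[OF \<open>1 \<le> p\<close>]])
       (auto simp: A_def simp flip: sum_divide_distrib)
  then have "((\<Sum>i\<in>I. a i * \<bar>x i\<bar>) / A) powr p \<le> (\<Sum>i\<in>I. a i * \<bar>x i\<bar> powr p) / A"
    by (simp add: sum_divide_distrib)
  then have "(\<Sum>i\<in>I. a i * \<bar>x i\<bar>) powr p / A powr p \<le> (\<Sum>i\<in>I. a i * \<bar>x i\<bar> powr p) / A"
    by (simp add: powr_divide)
  then show ?thesis
    using \<open>A > 0\<close> by (simp add: A_def[symmetric] field_simps powr_diff)
qed

lemma abs_diff_powr_le:
  fixes x y :: real
  assumes "1 \<le> p"
  shows "\<bar>x - y\<bar> powr p \<le> 2 powr (p - 1) * (\<bar>x\<bar> powr p + \<bar>y\<bar> powr p)"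
proof -
  have "\<bar>x - y\<bar> powr p \<le> (\<bar>x\<bar> + \<bar>y\<bar>) powr p"
    using assms by (intro powr_mono2) auto
  also have "\<dots> \<le> 2 powr (p - 1) * (\<bar>x\<bar> powr p + \<bar>y\<bar> powr p)"
    using powr_weighted_sum_le[where I="{True, False}" and a="\<lambda>_. 1" and x="\<lambda>b. if b then x else y"] assms
    by simp
  finally show ?thesis .
qed

lemma powr_diff_one_mult_le:
  fixes x y :: real
  assumes "0 \<le> x" "x \<le> y"
  shows "y powr (p - 1) * x \<le> y powr p"
proof -
  have "y powr (p - 1) * x \<le> y powr (p - 1) * y"
    using assms by (intro mult_left_mono) auto
  also have "\<dots> = y powr p"
    using powr_mult_base[of y "p - 1"] assms by (simp add: mult.commute)
  finally show ?thesis .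
qed

lemma mult_one_minus_le_quarter:
  fixes x :: real
  shows "x * (1 - x) \<le> 1/4" and "x \<noteq> 1/2 \<Longrightarrow> x * (1 - x) < 1/4"
proof -
  have "x * (1 - x) = 1/4 - (x - 1/2)\<^sup>2"
    by (simp add: power2_eq_square algebra_simps)
  then show "x * (1 - x) \<le> 1/4" and "x \<noteq> 1/2 \<Longrightarrow> x * (1 - x) < 1/4"
    by simp_all
qed

lemma two_powr_quarter_root_eq_half:
  assumes "0 < p"
  shows "(2 powr (p - 1) * (2 * (1/4) powr p)) powr (1 / p) = (1/2 :: real)"
proof -
  have "2 powr (p - 1) * (2 * (1/4) powr p) = 2 powr p * (1/4 :: real) powr p"
    by (simp add: powr_diff)
  also have "\<dots> = (1/2) powr p"
    using powr_mult[of 2 "1/4" p] by simp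
  finally have "2 powr (p - 1) * (2 * (1/4) powr p) = (1/2 :: real) powr p" .
  then show ?thesis
    using assms by (simp add: powr_powr)
qed

definition weighted_degree :: "('i::finite \<Rightarrow> 'i \<Rightarrow> real) \<Rightarrow> 'i \<Rightarrow> real" where
  "weighted_degree a i = (\<Sum>j\<in>UNIV. a i j)"

definition laplacian :: "('i::finite \<Rightarrow> 'i \<Rightarrow> real) \<Rightarrow> ('i \<Rightarrow> real) \<Rightarrow> 'i \<Rightarrow> real" where
  "laplacian a v k = (\<Sum>j\<in>UNIV. a k j * (v k - v j))"

definition laplacian_coeff :: "real \<Rightarrow> ('i::finite \<Rightarrow> 'i \<Rightarrow> real) \<Rightarrow> 'i \<Rightarrow> real" where
  "laplacian_coeff p a k =
     weighted_degree a k powr p + (\<Sum>i\<in>UNIV. weighted_degree a i powr (p - 1) * a i k)"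

lemma weighted_degree_nonneg: "(\<And>i j. 0 \<le> a i j) \<Longrightarrow> 0 \<le> weighted_degree a i"
  unfolding weighted_degree_def by (simp add: sum_nonneg)

lemma laplacian_coeff_nonneg: "(\<And>i j. 0 \<le> a i j) \<Longrightarrow> 0 \<le> laplacian_coeff p a k"
  unfolding laplacian_coeff_def by (simp add: sum_nonneg weighted_degree_nonneg)

lemma abs_laplacian_powr_le:
  assumes a: "\<And>i j. 0 \<le> a i j" and p: "1 \<le> p"
  shows "\<bar>laplacian a v k\<bar> powr p \<le>
    2 powr (p - 1) * (weighted_degree a k powr p * \<bar>v k\<bar> powr p
      + (\<Sum>j\<in>UNIV. weighted_degree a k powr (p - 1) * a k j * \<bar>v j\<bar> powr p))"
proof -
  let ?d = "weighted_degree a k"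
  have "\<bar>laplacian a v k\<bar> \<le> (\<Sum>j\<in>UNIV. a k j * \<bar>v k - v j\<bar>)"
    unfolding laplacian_def
    by (rule order_trans[OF sum_abs]) (simp add: abs_mult a)
  then have "\<bar>laplacian a v k\<bar> powr p \<le> (\<Sum>j\<in>UNIV. a k j * \<bar>v k - v j\<bar>) powr p"
    using p by (intro powr_mono2) auto
  also have "\<dots> \<le> ?d powr (p - 1) * (\<Sum>j\<in>UNIV. a k j * \<bar>v k - v j\<bar> powr p)"
    unfolding weighted_degree_def
    using powr_weighted_sum_le[where I=UNIV and a="a k" and x="\<lambda>j. v k - v j"] a p by simp
  also have "\<dots> \<le> ?d powr (p - 1) * (\<Sum>j\<in>UNIV. a k j * (2 powr (p - 1) * (\<bar>v k\<bar> powr p + \<bar>v j\<bar> powr p)))"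
    using a p by (intro mult_left_mono sum_mono abs_diff_powr_le) auto
  also have "\<dots> = 2 powr (p - 1) * (?d powr (p - 1) * ?d * \<bar>v k\<bar> powr p
      + (\<Sum>j\<in>UNIV. ?d powr (p - 1) * a k j * \<bar>v j\<bar> powr p))"
    unfolding weighted_degree_def
    by (simp add: distrib_left sum.distrib sum_distrib_left sum_distrib_right mult.left_commute mult.assoc)
  also have "?d powr (p - 1) * ?d = ?d powr p"
    using powr_mult_base[OF weighted_degree_nonneg[of a k, OF a], of "p - 1"] by (simp add: mult.commute)
  finally show ?thesis .
qed

lemma sum_powr_laplacian_le:
  assumes a: "\<And>i j. 0 \<le> a i j" and p: "1 \<le> p"
  shows "(\<Sum>k\<in>UNIV. \<bar>laplacian a v k\<bar> powr p)
    \<le> 2 powr (p - 1) * (\<Sum>k\<in>UNIV. laplacian_coeff p a k * \<bar>v k\<bar> powr p)"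
proof -
  let ?d = "weighted_degree a"
  have "(\<Sum>k\<in>UNIV. \<bar>laplacian a v k\<bar> powr p) \<le> 2 powr (p - 1) *
      ((\<Sum>k\<in>UNIV. ?d k powr p * \<bar>v k\<bar> powr p)
        + (\<Sum>k\<in>UNIV. \<Sum>j\<in>UNIV. ?d k powr (p - 1) * a k j * \<bar>v j\<bar> powr p))"
    unfolding sum_distrib_left sum.distrib[symmetric] distrib_left[symmetric]
    using a p by (intro sum_mono abs_laplacian_powr_le)
  also have "(\<Sum>k\<in>UNIV. \<Sum>j\<in>UNIV. ?d k powr (p - 1) * a k j * \<bar>v j\<bar> powr p)
      = (\<Sum>j\<in>UNIV. (\<Sum>k\<in>UNIV. ?d k powr (p - 1) * a k j) * \<bar>v j\<bar> powr p)"
    unfolding sum_distrib_right by (rule sum.swap)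
  also have "(\<Sum>k\<in>UNIV. ?d k powr p * \<bar>v k\<bar> powr p)
      + (\<Sum>j\<in>UNIV. (\<Sum>k\<in>UNIV. ?d k powr (p - 1) * a k j) * \<bar>v j\<bar> powr p)
      = (\<Sum>k\<in>UNIV. laplacian_coeff p a k * \<bar>v k\<bar> powr p)"
    unfolding laplacian_coeff_def distrib_right sum.distrib ..
  finally show ?thesis .
qed

lemma sum_weighted_degree_powr_le:
  assumes a: "\<And>i j. 0 \<le> a i j" and sym: "\<And>i j. a i j = a j i"
    and deg: "\<And>i. weighted_degree a i \<le> \<alpha>" and p: "1 \<le> p"
  shows "(\<Sum>i\<in>UNIV. weighted_degree a i powr (p - 1) * a i k) \<le> \<alpha> powr (p - 1) * weighted_degree a k"
proof -
  have "(\<Sum>i\<in>UNIV. weighted_degree a i powr (p - 1) * a i k) \<le> (\<Sum>i\<in>UNIV. \<alpha> powr (p - 1) * a i k)"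
    using a deg p weighted_degree_nonneg[of a, OF a] by (intro sum_mono mult_right_mono powr_mono2) auto
  also have "\<dots> = \<alpha> powr (p - 1) * weighted_degree a k"
    by (simp add: weighted_degree_def sum_distrib_left sym)
  finally show ?thesis .
qed

lemma laplacian_coeff_le:
  assumes a: "\<And>i j. 0 \<le> a i j" and sym: "\<And>i j. a i j = a j i"
    and deg: "\<And>i. weighted_degree a i \<le> \<alpha>" and p: "1 \<le> p"
  shows "laplacian_coeff p a k \<le> 2 * \<alpha> powr p"
proof -
  have "0 \<le> weighted_degree a k"
    using weighted_degree_nonneg[of a k, OF a] .
  then have "weighted_degree a k powr p \<le> \<alpha> powr p"
             "\<alpha> powr (p - 1) * weighted_degree a k \<le> \<alpha> powr p"
    using deg p by (auto intro: powr_mono2 powr_diff_one_mult_le)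
  then show ?thesis
    using sum_weighted_degree_powr_le[OF a sym deg p, of k]
    unfolding laplacian_coeff_def by linarith
qed

lemma laplacian_coeff_less:
  assumes a: "\<And>i j. 0 \<le> a i j" and sym: "\<And>i j. a i j = a j i"
    and deg: "\<And>i. weighted_degree a i \<le> \<alpha>" and p: "1 < p"
    and strict: "weighted_degree a k < \<alpha> \<or> (\<exists>i. 0 < a i k \<and> weighted_degree a i < \<alpha>)"
  shows "laplacian_coeff p a k < 2 * \<alpha> powr p"
proof -
  let ?d = "weighted_degree a" and ?S = "\<Sum>i\<in>UNIV. weighted_degree a i powr (p - 1) * a i k"
  have d: "0 \<le> ?d i" for i
    using weighted_degree_nonneg[of a i, OF a] .
  have le: "?d k powr p \<le> \<alpha> powr p" "?S \<le> \<alpha> powr (p - 1) * ?d k"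
           "\<alpha> powr (p - 1) * ?d k \<le> \<alpha> powr p"
    using d deg p sum_weighted_degree_powr_le[OF a sym deg, of p k]
    by (auto intro: powr_mono2 powr_diff_one_mult_le)
  from strict have "?d k powr p < \<alpha> powr p \<or> ?S < \<alpha> powr (p - 1) * ?d k"
  proof
    assume "?d k < \<alpha>"
    then show ?thesis
      using d p by (auto intro: powr_less_mono2)
  next
    assume "\<exists>i. 0 < a i k \<and> ?d i < \<alpha>"
    then obtain i where i: "0 < a i k" "?d i < \<alpha>"
      by blast
    have "?d i powr (p - 1) * a i k < \<alpha> powr (p - 1) * a i k"
      using i d p by (intro mult_strict_right_mono powr_less_mono2) auto
    then have "?S < (\<Sum>i\<in>UNIV. \<alpha> powr (p - 1) * a i k)"
      using a d deg p by (intro sum_strict_mono_ex1) (auto intro!: mult_right_mono powr_mono2)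
    also have "\<dots> = \<alpha> powr (p - 1) * ?d k"
      by (simp add: weighted_degree_def sum_distrib_left sym)
    finally show ?thesis ..
  qed
  then show ?thesis
    using le unfolding laplacian_coeff_def by linarith
qed

lemma pnorm_pos:
  assumes "v \<noteq> 0" "0 < p"
  shows "0 < pnorm p v"
proof -
  obtain i where "v $ i \<noteq> 0"
    using assms(1) by (auto simp: vec_eq_iff)
  then have "0 < \<bar>v $ i\<bar> powr p"
    by simp
  also have "\<dots> \<le> (\<Sum>j\<in>UNIV. \<bar>v $ j\<bar> powr p)"
    by (intro member_le_sum) auto
  finally show ?thesis
    unfolding pnorm_def by simp
qed

lemma pnorm_scaleR:
  assumes "0 < p"
  shows "pnorm p (c *\<^sub>R v) = \<bar>c\<bar> * pnorm p v"
proof -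
  have "(\<Sum>j\<in>UNIV. \<bar>(c *\<^sub>R v) $ j\<bar> powr p) = \<bar>c\<bar> powr p * (\<Sum>j\<in>UNIV. \<bar>v $ j\<bar> powr p)"
    by (simp add: abs_mult powr_mult sum_distrib_left)
  moreover have "(\<bar>c\<bar> powr p) powr (1 / p) = \<bar>c\<bar>"
    using assms by (simp add: powr_powr)
  ultimately show ?thesis
    unfolding pnorm_def by (simp add: powr_mult sum_nonneg)
qed

lemma pnorm_le_if_sum_powr_le:
  assumes "0 < p" "0 \<le> C"
    and "(\<Sum>k\<in>UNIV. \<bar>w $ k\<bar> powr p) \<le> C * (\<Sum>k\<in>UNIV. \<bar>v $ k\<bar> powr p)"
  shows "pnorm p w \<le> C powr (1 / p) * pnorm p v"
proof -
  have "pnorm p w \<le> (C * (\<Sum>k\<in>UNIV. \<bar>v $ k\<bar> powr p)) powr (1 / p)"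
    unfolding pnorm_def using assms by (intro powr_mono2) (auto simp: sum_nonneg)
  also have "\<dots> = C powr (1 / p) * pnorm p v"
    unfolding pnorm_def using assms by (simp add: powr_mult sum_nonneg)
  finally show ?thesis .
qed

lemma op_pnorm_le:
  fixes A :: "real^'n^'n"
  assumes "0 < p" and bound: "\<And>v. pnorm p (A *v v) \<le> b * pnorm p v"
  shows "op_pnorm p A \<le> b"
  unfolding op_pnorm_def
proof (rule cSup_least)
  have "(\<chi> i. 1) \<noteq> (0 :: real^'n)"
    by (simp add: vec_eq_iff)
  then show "{pnorm p (A *v v) / pnorm p v |v. v \<noteq> 0} \<noteq> {}"
    by blast
next
  fix x
  assume "x \<in> {pnorm p (A *v v) / pnorm p v |v. v \<noteq> 0}"
  then obtain v where "v \<noteq> 0" "x = pnorm p (A *v v) / pnorm p v"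
    by blast
  then show "x \<le> b"
    using bound[of v] pnorm_pos[of v p] \<open>0 < p\<close> by (simp add: divide_le_eq)
qed

lemma op_pnorm_eq_eigenvalue:
  fixes A :: "real^'n^'n"
  assumes "0 < p" and bound: "\<And>v. pnorm p (A *v v) \<le> \<bar>c\<bar> * pnorm p v"
    and eigen: "A *v u = c *\<^sub>R u" "u \<noteq> 0"
  shows "op_pnorm p A = \<bar>c\<bar>"
  unfolding op_pnorm_def
proof (rule cSup_eq_maximum)
  have "pnorm p (A *v u) / pnorm p u = \<bar>c\<bar>"
    using eigen pnorm_pos[of u p] \<open>0 < p\<close> by (simp add: pnorm_scaleR)
  then show "\<bar>c\<bar> \<in> {pnorm p (A *v v) / pnorm p v |v. v \<noteq> 0}"
    using eigen by force
next
  fix x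
  assume "x \<in> {pnorm p (A *v v) / pnorm p v |v. v \<noteq> 0}"
  then obtain v where "v \<noteq> 0" "x = pnorm p (A *v v) / pnorm p v"
    by blast
  then show "x \<le> \<bar>c\<bar>"
    using bound[of v] pnorm_pos[of v p] \<open>0 < p\<close> by (simp add: divide_le_eq)
qed

lemma prob_simplex_nonneg: "s \<in> prob_simplex \<Longrightarrow> 0 \<le> s $ i"
  by (simp add: prob_simplex_def)

lemma prob_simplex_sum: "s \<in> prob_simplex \<Longrightarrow> (\<Sum>i\<in>UNIV. s $ i) = 1"
  by (simp add: prob_simplex_def)

lemma prob_simplex_eq_zero_outside_pair:
  assumes s: "s \<in> prob_simplex" and "i \<noteq> j" "s $ i + s $ j = 1" "l \<noteq> i" "l \<noteq> j"
  shows "s $ l = 0"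
proof -
  have "s $ i + s $ j + s $ l = (\<Sum>m\<in>{i, j, l}. s $ m)"
    using assms by (simp add: add.assoc)
  also have "\<dots> \<le> (\<Sum>m\<in>UNIV. s $ m)"
    using s by (intro sum_mono2) (auto simp: prob_simplex_def)
  finally have "s $ l \<le> 0"
    using assms by (simp add: prob_simplex_def)
  then show ?thesis
    using prob_simplex_nonneg[OF s, of l] by linarith
qed

definition two_halves :: "real^'n \<Rightarrow> bool" where
  "two_halves s \<longleftrightarrow>
     (\<exists>i j. i \<noteq> j \<and> s $ i = 1/2 \<and> s $ j = 1/2 \<and> (\<forall>k. k \<noteq> i \<and> k \<noteq> j \<longrightarrow> s $ k = 0))"

lemma prob_simplex_half_not_two_halves:
  assumes s: "s \<in> prob_simplex" and k: "s $ k = 1/2" and "\<not> two_halves s"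
  obtains i where "0 < s $ i" "s $ i \<noteq> 1/2"
proof -
  have "(\<Sum>j\<in>UNIV - {k}. s $ j) = 1/2"
    using s k by (simp add: prob_simplex_def sum_diff1)
  then obtain j where j: "j \<noteq> k" "0 < s $ j"
    using sum_nonpos[of "UNIV - {k}" "\<lambda>j. s $ j"] by fastforce
  have "s $ j \<noteq> 1/2"
  proof
    assume "s $ j = 1/2"
    then have "\<forall>l. l \<noteq> k \<and> l \<noteq> j \<longrightarrow> s $ l = 0"
      using prob_simplex_eq_zero_outside_pair[OF s, of k j] j k by auto
    then show False
      using \<open>\<not> two_halves s\<close> \<open>s $ j = 1/2\<close> j k unfolding two_halves_def by blast
  qed
  with j that show ?thesis
    by blast
qed

lemma Mmat_mult_vec_nth:
  "(Mmat s *v v) $ k = s $ k * v $ k - s $ k * (\<Sum>l\<in>UNIV. s $ l * v $ l)"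
proof -
  have "(Mmat s *v v) $ k = (\<Sum>l\<in>UNIV. (if k = l then s $ k * v $ l else 0) - s $ k * (s $ l * v $ l))"
    unfolding Mmat_def Diag_def matrix_vector_mult_def
    by (simp, intro sum.cong) (auto simp: algebra_simps)
  also have "\<dots> = s $ k * v $ k - s $ k * (\<Sum>l\<in>UNIV. s $ l * v $ l)"
    by (simp add: sum_subtractf sum_distrib_left)
  finally show ?thesis .
qed

text \<open>
  The diagonal of s s^T does not contribute to the Laplacian, but keeping it would raise
  the weighted degree of k from s_k (1 - s_k) to s_k.
\<close>
definition offdiag_outer :: "real^'n \<Rightarrow> 'n \<Rightarrow> 'n \<Rightarrow> real" where
  "offdiag_outer s i j = (if i = j then 0 else s $ i * s $ j)"

lemma Mmat_mult_vec_eq_laplacian: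
  assumes "(\<Sum>i\<in>UNIV. s $ i) = 1"
  shows "(Mmat s *v v) $ k = laplacian (offdiag_outer s) (($) v) k"
proof -
  have "laplacian (offdiag_outer s) (($) v) k = (\<Sum>j\<in>UNIV. s $ k * v $ k * s $ j - s $ k * (s $ j * v $ j))"
    unfolding laplacian_def offdiag_outer_def by (intro sum.cong) (auto simp: algebra_simps)
  also have "\<dots> = s $ k * v $ k * (\<Sum>j\<in>UNIV. s $ j) - s $ k * (\<Sum>j\<in>UNIV. s $ j * v $ j)"
    by (simp add: sum_subtractf sum_distrib_left)
  finally show ?thesis
    using assms by (simp add: Mmat_mult_vec_nth)
qed

lemma weighted_degree_offdiag_outer:
  assumes "(\<Sum>i\<in>UNIV. s $ i) = 1"
  shows "weighted_degree (offdiag_outer s) k = s $ k * (1 - s $ k)"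
proof -
  have "weighted_degree (offdiag_outer s) k = (\<Sum>j\<in>UNIV. s $ k * s $ j - (if k = j then s $ k * s $ k else 0))"
    unfolding weighted_degree_def offdiag_outer_def by (intro sum.cong) auto
  also have "\<dots> = s $ k * (\<Sum>j\<in>UNIV. s $ j) - s $ k * s $ k"
    by (simp add: sum_subtractf sum_distrib_left)
  finally show ?thesis
    using assms by (simp add: algebra_simps)
qed

lemma offdiag_outer_nonneg: "s \<in> prob_simplex \<Longrightarrow> 0 \<le> offdiag_outer s i j"
  by (simp add: offdiag_outer_def prob_simplex_nonneg)

lemma offdiag_outer_sym: "offdiag_outer s i j = offdiag_outer s j i"
  by (simp add: offdiag_outer_def mult.commute)

lemma pnorm_Mmat_mult_vec_le:
  assumes s: "s \<in> prob_simplex" and p: "1 \<le> p"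
    and C: "\<And>k. laplacian_coeff p (offdiag_outer s) k \<le> C"
  shows "pnorm p (Mmat s *v v) \<le> (2 powr (p - 1) * C) powr (1 / p) * pnorm p v"
proof (rule pnorm_le_if_sum_powr_le)
  note sum_s = prob_simplex_sum[OF s]
  have a: "\<And>i j. 0 \<le> offdiag_outer s i j"
    using offdiag_outer_nonneg[OF s] .
  have "0 \<le> laplacian_coeff p (offdiag_outer s) k" for k
    using laplacian_coeff_nonneg[of "offdiag_outer s", OF a] .
  then have "0 \<le> C"
    by (meson C order_trans)
  then show "0 \<le> 2 powr (p - 1) * C"
    by simp
  have "(\<Sum>k\<in>UNIV. \<bar>(Mmat s *v v) $ k\<bar> powr p)
      \<le> 2 powr (p - 1) * (\<Sum>k\<in>UNIV. laplacian_coeff p (offdiag_outer s) k * \<bar>v $ k\<bar> powr p)"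
    unfolding Mmat_mult_vec_eq_laplacian[OF sum_s] using sum_powr_laplacian_le[OF a p] .
  also have "\<dots> \<le> 2 powr (p - 1) * (\<Sum>k\<in>UNIV. C * \<bar>v $ k\<bar> powr p)"
    using C by (intro mult_left_mono sum_mono mult_right_mono) auto
  finally show "(\<Sum>k\<in>UNIV. \<bar>(Mmat s *v v) $ k\<bar> powr p) \<le> 2 powr (p - 1) * C * (\<Sum>k\<in>UNIV. \<bar>v $ k\<bar> powr p)"
    by (simp add: sum_distrib_left mult.assoc)
qed (use p in simp)

lemma laplacian_coeff_offdiag_outer_le:
  assumes s: "s \<in> prob_simplex" and p: "1 \<le> p"
  shows "laplacian_coeff p (offdiag_outer s) k \<le> 2 * (1/4) powr p"
proof (rule laplacian_coeff_le[OF offdiag_outer_nonneg[OF s] offdiag_outer_sym _ p])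
  show "weighted_degree (offdiag_outer s) i \<le> 1/4" for i
    unfolding weighted_degree_offdiag_outer[OF prob_simplex_sum[OF s]] by (rule mult_one_minus_le_quarter)
qed

lemma laplacian_coeff_offdiag_outer_less:
  assumes s: "s \<in> prob_simplex" and p: "1 < p" and "\<not> two_halves s"
  shows "laplacian_coeff p (offdiag_outer s) k < 2 * (1/4) powr p"
proof (rule laplacian_coeff_less[OF offdiag_outer_nonneg[OF s] offdiag_outer_sym _ p])
  note deg = weighted_degree_offdiag_outer[OF prob_simplex_sum[OF s]]
  show "weighted_degree (offdiag_outer s) i \<le> 1/4" for i
    unfolding deg by (rule mult_one_minus_le_quarter)
  show "weighted_degree (offdiag_outer s) k < 1/4
      \<or> (\<exists>i. 0 < offdiag_outer s i k \<and> weighted_degree (offdiag_outer s) i < 1/4)"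
  proof (cases "s $ k = 1/2")
    case True
    then obtain i where i: "0 < s $ i" "s $ i \<noteq> 1/2"
      using prob_simplex_half_not_two_halves[OF s _ \<open>\<not> two_halves s\<close>] by blast
    then have "0 < offdiag_outer s i k"
      using True by (auto simp: offdiag_outer_def)
    moreover have "weighted_degree (offdiag_outer s) i < 1/4"
      unfolding deg using i(2) by (rule mult_one_minus_le_quarter(2))
    ultimately show ?thesis
      by blast
  next
    case False
    then show ?thesis
      unfolding deg by (intro disjI1 mult_one_minus_le_quarter(2))
  qed
qed

lemma pnorm_Mmat_mult_vec_le_half:
  assumes s: "s \<in> prob_simplex" and p: "1 \<le> p"
  shows "pnorm p (Mmat s *v v) \<le> 1/2 * pnorm p v"
  using pnorm_Mmat_mult_vec_le[OF s p laplacian_coeff_offdiag_outer_le[OF s p]] p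
  by (simp add: two_powr_quarter_root_eq_half)

lemma op_pnorm_Mmat_two_halves:
  fixes s :: "real^'n"
  assumes s: "s \<in> prob_simplex" and p: "1 \<le> p" and "two_halves s"
  shows "op_pnorm p (Mmat s) = 1/2"
proof -
  obtain i j where ij: "i \<noteq> j" "s $ i = 1/2" "s $ j = 1/2" "\<forall>k. k \<noteq> i \<and> k \<noteq> j \<longrightarrow> s $ k = 0"
    using \<open>two_halves s\<close> unfolding two_halves_def by blast
  define u :: "real^'n" where "u = (\<chi> l. if l = i then 1 else if l = j then -1 else 0)"
  have "(\<Sum>l\<in>UNIV. s $ l * u $ l) = (\<Sum>l\<in>UNIV. (if l = i then 1/2 else 0) - (if l = j then 1/2 else 0))"
    using ij by (intro sum.cong) (auto simp: u_def)
  then have "(\<Sum>l\<in>UNIV. s $ l * u $ l) = 0"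
    by (simp add: sum_subtractf)
  then have "Mmat s *v u = (1/2) *\<^sub>R u"
    using ij by (auto simp: vec_eq_iff Mmat_mult_vec_nth u_def)
  moreover have "u \<noteq> 0"
    by (auto simp: u_def vec_eq_iff)
  ultimately show ?thesis
    using op_pnorm_eq_eigenvalue[of p "Mmat s" "1/2" u] pnorm_Mmat_mult_vec_le_half[OF s p] p by simp
qed

lemma op_pnorm_Mmat_less_half:
  assumes s: "s \<in> prob_simplex" and p: "1 < p" and "\<not> two_halves s"
  shows "op_pnorm p (Mmat s) < 1/2"
proof -
  define C where "C = Max (range (laplacian_coeff p (offdiag_outer s)))"
  have C: "laplacian_coeff p (offdiag_outer s) k \<le> C" for k
    unfolding C_def by (intro Max_ge) auto
  have "C < 2 * (1/4) powr p"
    unfolding C_def using laplacian_coeff_offdiag_outer_less[OF assms] by (subst Max_less_iff) auto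
  moreover have "0 \<le> C"
    using laplacian_coeff_nonneg[of "offdiag_outer s", OF offdiag_outer_nonneg[OF s]]
    by (meson C order_trans)
  ultimately have "(2 powr (p - 1) * C) powr (1 / p) < (2 powr (p - 1) * (2 * (1/4) powr p)) powr (1 / p)"
    using p by (intro powr_less_mono2) auto
  moreover have "op_pnorm p (Mmat s) \<le> (2 powr (p - 1) * C) powr (1 / p)"
    using pnorm_Mmat_mult_vec_le[OF s _ C] p by (intro op_pnorm_le) auto
  ultimately show ?thesis
    using p by (simp add: two_powr_quarter_root_eq_half)
qed

theorem lemma4:
  fixes s :: "real^'n" and p :: real
  assumes "CARD('n) > 2" and "1 < p" and "s \<in> prob_simplex"
  shows "op_pnorm p (Mmat s) = 1/2 \<longleftrightarrow>
    (\<exists>i j. i \<noteq> j \<and> s $ i = 1/2 \<and> s $ j = 1/2 \<and> (\<forall>k. k \<noteq> i \<and> k \<noteq> j \<longrightarrow> s $ k = 0))"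
  using op_pnorm_Mmat_two_halves[OF assms(3)] op_pnorm_Mmat_less_half[OF assms(3,2)] assms(2)
  unfolding two_halves_def[symmetric] by fastforce

end
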